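(* For every integer $n \ge 6$, $\gamma^{\rm ID}(K_n \times K_{2n-5}) = 2n-4$.
   Context: For a graph $G$ and vertex $x$, $N[x]$ denotes the closed neighborhood of $x$. A set $C \subseteq V(G)$ is an identifying code (ID code) of $G$ if $C$ is a dominating set of $G$ and $N[x]\cap C \ne N[y]\cap C$ for every pair of distinct vertices $x,y$. $\gamma^{\rm ID}(G)$ is the minimum cardinality of an ID code of $G$. The direct product $G_1\times G_2$ has vertex set $V(G_1)\times V(G_2)$, with $(u_1,u_2)$ adjacent to $(v_1,v_2)$ iff $u_1v_1\in E(G_1)$ and $u_2v_2 \in E(G_2)$. $K_n$ is the complete graph on vertex set $[n]=\{1,\dots,n\}$; thus in $K_n\times K_m$ two vertices are adjacent iff they differ in both coordinates. *)

theory Defs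
  imports Main
begin

text \<open>A (finite simple) graph is given by a vertex set V and a symmetric,
irreflexive adjacency relation E.  Closed neighbourhood N[x] within V.\<close>

definition closed_nbhd :: "'a set \<Rightarrow> ('a \<Rightarrow> 'a \<Rightarrow> bool) \<Rightarrow> 'a \<Rightarrow> 'a set" where
  "closed_nbhd V E x = {y \<in> V. y = x \<or> E x y}"

definition dominating_set :: "'a set \<Rightarrow> ('a \<Rightarrow> 'a \<Rightarrow> bool) \<Rightarrow> 'a set \<Rightarrow> bool" where
  "dominating_set V E C \<longleftrightarrow> C \<subseteq> V \<and> (\<forall>x\<in>V. closed_nbhd V E x \<inter> C \<noteq> {})"

definition id_code :: "'a set \<Rightarrow> ('a \<Rightarrow> 'a \<Rightarrow> bool) \<Rightarrow> 'a set \<Rightarrow> bool" where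
  "id_code V E C \<longleftrightarrow> dominating_set V E C \<and>
     (\<forall>x\<in>V. \<forall>y\<in>V. x \<noteq> y \<longrightarrow> closed_nbhd V E x \<inter> C \<noteq> closed_nbhd V E y \<inter> C)"

text \<open>Identifying code number: minimum cardinality of an ID code
(for finite graphs admitting an ID code).\<close>

definition gamma_ID :: "'a set \<Rightarrow> ('a \<Rightarrow> 'a \<Rightarrow> bool) \<Rightarrow> nat" where
  "gamma_ID V E = Min (card ` {C. id_code V E C})"

definition K_verts :: "nat \<Rightarrow> nat set" where
  "K_verts n = {1..n}"

definition K_adj :: "nat \<Rightarrow> nat \<Rightarrow> bool" where
  "K_adj u v \<longleftrightarrow> u \<noteq> v"

definition dprod_verts :: "'a set \<Rightarrow> 'b set \<Rightarrow> ('a \<times> 'b) set" where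
  "dprod_verts V1 V2 = V1 \<times> V2"

definition dprod_adj :: "('a \<Rightarrow> 'a \<Rightarrow> bool) \<Rightarrow> ('b \<Rightarrow> 'b \<Rightarrow> bool) \<Rightarrow> ('a \<times> 'b) \<Rightarrow> ('a \<times> 'b) \<Rightarrow> bool" where
  "dprod_adj E1 E2 u v \<longleftrightarrow> E1 (fst u) (fst v) \<and> E2 (snd u) (snd v)"

end

theory Submission
  imports Defs
begin

(* Identifying codes of K_n x K_m, following the rook's-graph point of view: a vertex
   (a,b) of K_R x K_Q sees exactly the codewords outside its own row a and column b.

   1. Two vertices have the same trace on a code C iff (same row) their two columns
      carry no codeword, or (same column) their two rows carry none, or (otherwise)
      every codeword in their two rows or two columns lies in the 2x2 block they span.
   2. Lower bound: an identifying code C with card C <= |Q| satisfies 2|R| <= |C| + 4.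
      At most one row and one column are empty, so a short code has three rows with a
      single codeword; the column budget |C| <= |Q| allows at most one column with two
      or more codewords, and every configuration of three singleton rows then produces
      an unseparated pair by (1).
   3. Upper bound: an explicit code of size 2n-4 in K_n x K_(2n-5): rows 1,2,3 in
      column 1 and, for j = 2..2n-6, the codeword ((j+7) div 2, j), checked with (1).
   The theorem follows: with |Q| = 2n-5, a code of size <= 2n-5 would violate (2). *)

abbreviation KxK_adj :: "'a \<times> 'b \<Rightarrow> 'a \<times> 'b \<Rightarrow> bool" where
  "KxK_adj \<equiv> dprod_adj (\<noteq>) (\<noteq>)"

lemma dprod_K_adj: "dprod_adj K_adj K_adj = KxK_adj"
proof -
  have "K_adj = (\<noteq>)" by (intro ext) (simp add: K_adj_def)
  then show ?thesis by simp
qed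

lemma KxK_trace:
  assumes "C \<subseteq> R \<times> Q"
  shows "closed_nbhd (R \<times> Q) KxK_adj x \<inter> C = {c \<in> C. c = x \<or> fst c \<noteq> fst x \<and> snd c \<noteq> snd x}"
  using assms unfolding closed_nbhd_def dprod_adj_def by auto

lemma restricted_Collect_eq_iff: "{x \<in> A. P x} = {x \<in> A. P' x} \<longleftrightarrow> (\<forall>x \<in> A. P x \<longleftrightarrow> P' x)"
  by blast

lemma KxK_trace_eq_iff:
  assumes "C \<subseteq> R \<times> Q" and "(a, b) \<noteq> (a', b')"
  shows "closed_nbhd (R \<times> Q) KxK_adj (a, b) \<inter> C = closed_nbhd (R \<times> Q) KxK_adj (a', b') \<inter> C
     \<longleftrightarrow> (a = a' \<and> (\<forall>(u, v) \<in> C. v \<noteq> b \<and> v \<noteq> b'))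
       \<or> (b = b' \<and> (\<forall>(u, v) \<in> C. u \<noteq> a \<and> u \<noteq> a'))
       \<or> (a \<noteq> a' \<and> b \<noteq> b' \<and> (\<forall>(u, v) \<in> C. (u \<in> {a, a'} \<or> v \<in> {b, b'}) \<longrightarrow> u \<in> {a, a'} \<and> v \<in> {b, b'}))"
    (is "?eq \<longleftrightarrow> ?rhs")
proof -
  have "?eq \<longleftrightarrow> (\<forall>c \<in> C. (c = (a, b) \<or> fst c \<noteq> a \<and> snd c \<noteq> b)
                        \<longleftrightarrow> (c = (a', b') \<or> fst c \<noteq> a' \<and> snd c \<noteq> b'))"
    unfolding KxK_trace[OF assms(1)] fst_conv snd_conv by (rule restricted_Collect_eq_iff)
  also have "\<dots> \<longleftrightarrow> (\<forall>(u, v) \<in> C. ((u, v) = (a, b) \<or> u \<noteq> a \<and> v \<noteq> b)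
                        \<longleftrightarrow> ((u, v) = (a', b') \<or> u \<noteq> a' \<and> v \<noteq> b'))"
    by (simp add: case_prod_beta prod_eq_iff)
  also have "\<dots> \<longleftrightarrow> ?rhs"
  proof (cases "a = a'")
    case True
    then have "b \<noteq> b'" using assms(2) by simp
    have "(((u, v) = (a, b) \<or> u \<noteq> a \<and> v \<noteq> b) \<longleftrightarrow> ((u, v) = (a', b') \<or> u \<noteq> a' \<and> v \<noteq> b'))
        \<longleftrightarrow> v \<noteq> b \<and> v \<noteq> b'" for u v
      using True \<open>b \<noteq> b'\<close> by auto
    then show ?thesis using True \<open>b \<noteq> b'\<close> by simp
  next
    case a_ne: False
    show ?thesis
    proof (cases "b = b'")
      case True
      have "(((u, v) = (a, b) \<or> u \<noteq> a \<and> v \<noteq> b) \<longleftrightarrow> ((u, v) = (a', b') \<or> u \<noteq> a' \<and> v \<noteq> b'))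
          \<longleftrightarrow> u \<noteq> a \<and> u \<noteq> a'" for u v
        using True a_ne by auto
      then show ?thesis using True a_ne by simp
    next
      case False
      have "(((u, v) = (a, b) \<or> u \<noteq> a \<and> v \<noteq> b) \<longleftrightarrow> ((u, v) = (a', b') \<or> u \<noteq> a' \<and> v \<noteq> b'))
          \<longleftrightarrow> ((u \<in> {a, a'} \<or> v \<in> {b, b'}) \<longrightarrow> u \<in> {a, a'} \<and> v \<in> {b, b'})" for u v
        using False a_ne by auto
      then show ?thesis using False a_ne by simp
    qed
  qed
  finally show ?thesis .
qed

lemma card_le_sum_plus_zeros:
  fixes f :: "'a \<Rightarrow> nat"
  assumes "finite A"
  shows "card A \<le> sum f A + card {x \<in> A. f x = 0}"
proof -
  have "(\<Sum>x\<in>A. 1) \<le> (\<Sum>x\<in>A. f x + of_bool (f x = 0))"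
    by (rule sum_mono) auto
  then show ?thesis
    using assms by (simp add: sum.distrib Int_def conj_commute)
qed

lemma double_card_le_sum:
  fixes f :: "'a \<Rightarrow> nat"
  assumes "finite A"
  shows "2 * card A \<le> sum f A + 2 * card {x \<in> A. f x = 0} + card {x \<in> A. f x = 1}"
proof -
  have "(\<Sum>x\<in>A. 2) \<le> (\<Sum>x\<in>A. f x + 2 * of_bool (f x = 0) + of_bool (f x = 1))"
    by (rule sum_mono) auto
  then show ?thesis
    using assms by (simp add: sum.distrib sum_distrib_left[symmetric] Int_def conj_commute)
qed

lemma sum_subset_le_card_plus_zeros:
  fixes f :: "'a \<Rightarrow> nat"
  assumes "finite A" and "S \<subseteq> A" and "sum f A \<le> card A"
  shows "sum f S \<le> card S + card {x \<in> A. f x = 0}"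
proof -
  have "finite S" using assms(1,2) by (rule finite_subset[rotated])
  have split: "sum f A = sum f S + sum f (A - S)"
    using assms(1,2) by (metis sum.subset_diff add.commute)
  have card_split: "card A = card S + card (A - S)"
    using assms(1,2) by (metis card_Diff_subset \<open>finite S\<close> card_mono le_add_diff_inverse)
  have "card (A - S) \<le> sum f (A - S) + card {x \<in> A - S. f x = 0}"
    using assms(1) by (intro card_le_sum_plus_zeros) simp
  moreover have "card {x \<in> A - S. f x = 0} \<le> card {x \<in> A. f x = 0}"
    using assms(1) by (intro card_mono) auto
  ultimately show ?thesis using split card_split assms(3) by linarith
qed

section \<open>Structure of an identifying code of a direct product of complete graphs\<close>

locale KxK_id_code =
  fixes R :: "'a set" and Q :: "'b set" and C :: "('a \<times> 'b) set"
  assumes finite_R: "finite R" and finite_Q: "finite Q"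
    and R_nonempty: "R \<noteq> {}" and Q_nonempty: "Q \<noteq> {}"
    and code: "id_code (R \<times> Q) KxK_adj C"
begin

definition row :: "'a \<Rightarrow> 'b set" where "row r = {q. (r, q) \<in> C}"
definition col :: "'b \<Rightarrow> 'a set" where "col q = {r. (r, q) \<in> C}"

lemma code_subset: "C \<subseteq> R \<times> Q"
  using code unfolding id_code_def dominating_set_def by blast

lemma row_subset: "row r \<subseteq> Q" and col_subset: "col q \<subseteq> R"
  using code_subset unfolding row_def col_def by auto

lemma finite_row: "finite (row r)" and finite_col: "finite (col q)"
  using finite_subset[OF row_subset finite_Q] finite_subset[OF col_subset finite_R] .

lemma separates:
  "x \<in> R \<times> Q \<Longrightarrow> y \<in> R \<times> Q \<Longrightarrow> x \<noteq> y \<Longrightarrow>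
   closed_nbhd (R \<times> Q) KxK_adj x \<inter> C \<noteq> closed_nbhd (R \<times> Q) KxK_adj y \<inter> C"
  using code unfolding id_code_def by blast

lemma card_by_rows: "card C = (\<Sum>r\<in>R. card (row r))"
proof -
  have "C = (SIGMA r:R. row r)" using code_subset unfolding row_def by auto
  then have "card C = card (SIGMA r:R. row r)" by (rule arg_cong)
  also have "\<dots> = (\<Sum>r\<in>R. card (row r))" by (rule card_SigmaI) (simp_all add: finite_R finite_row)
  finally show ?thesis .
qed

lemma card_by_cols: "card C = (\<Sum>q\<in>Q. card (col q))"
proof -
  have "card C = card (prod.swap ` C)" by (simp add: card_image)
  also have "prod.swap ` C = (SIGMA q:Q. col q)" using code_subset unfolding col_def by force
  also have "card \<dots> = (\<Sum>q\<in>Q. card (col q))" by (rule card_SigmaI) (simp_all add: finite_Q finite_col)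
  finally show ?thesis .
qed

text \<open>Two empty columns would leave the two vertices of any row in them unseparated.\<close>

lemma empty_cols_le_1: "card {q \<in> Q. col q = {}} \<le> 1"
proof (rule ccontr)
  assume "\<not> ?thesis"
  then obtain q q' where qq': "q \<in> Q" "q' \<in> Q" "q \<noteq> q'" "col q = {}" "col q' = {}"
    using finite_Q by (auto simp: card_le_Suc0_iff_eq)
  obtain r where "r \<in> R" using R_nonempty by blast
  have "\<forall>(u, v) \<in> C. v \<noteq> q \<and> v \<noteq> q'" using qq' unfolding col_def by blast
  then show False
    using separates[of "(r, q)" "(r, q')"] KxK_trace_eq_iff[OF code_subset] qq' \<open>r \<in> R\<close> by auto
qed

lemma empty_rows_le_1: "card {r \<in> R. row r = {}} \<le> 1"
proof (rule ccontr)
  assume "\<not> ?thesis"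
  then obtain r r' where rr': "r \<in> R" "r' \<in> R" "r \<noteq> r'" "row r = {}" "row r' = {}"
    using finite_R by (auto simp: card_le_Suc0_iff_eq)
  obtain q where "q \<in> Q" using Q_nonempty by blast
  have "\<forall>(u, v) \<in> C. u \<noteq> r \<and> u \<noteq> r'" using rr' unfolding row_def by blast
  then show False
    using separates[of "(r, q)" "(r', q)"] KxK_trace_eq_iff[OF code_subset] rr' \<open>q \<in> Q\<close> by auto
qed

text \<open>No 2x2 block is closed, i.e. contains all codewords of its rows and columns:
  otherwise its two off-diagonal corners are unseparated.\<close>

lemma no_closed_block:
  assumes "a \<in> R" "a' \<in> R" "b \<in> Q" "b' \<in> Q" "a \<noteq> a'" "b \<noteq> b'"
    and closed: "\<forall>(u, v) \<in> C. (u \<in> {a, a'} \<or> v \<in> {b, b'}) \<longrightarrow> u \<in> {a, a'} \<and> v \<in> {b, b'}"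
  shows False
  using separates[of "(a, b)" "(a', b')"] KxK_trace_eq_iff[OF code_subset, of a b a' b'] assms
  by auto

text \<open>Two rows whose only codewords are alone in their columns span a closed block.\<close>

lemma no_isolated_pair:
  assumes "a \<in> R" "b \<in> R" "a \<noteq> b"
    and "row a = {qa}" "row b = {qb}" "col qa = {a}" "col qb = {b}"
  shows False
proof (rule no_closed_block)
  show "qa \<in> Q" "qb \<in> Q" using assms(4,5) row_subset by blast+
  show "qa \<noteq> qb" using assms(3,6,7) by auto
  show "\<forall>(u, v) \<in> C. (u \<in> {a, b} \<or> v \<in> {qa, qb}) \<longrightarrow> u \<in> {a, b} \<and> v \<in> {qa, qb}"
    using assms(4-7) unfolding row_def col_def by blast
qed (use assms in auto)

section \<open>Identifying codes that are not longer than a column\<close>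

context
  assumes short: "card C \<le> card Q"
begin

lemma cols_budget:
  assumes "S \<subseteq> Q"
  shows "(\<Sum>q\<in>S. card (col q)) \<le> card S + card {q \<in> Q. col q = {}}"
proof -
  have "{q \<in> Q. card (col q) = 0} = {q \<in> Q. col q = {}}" by (simp add: finite_col)
  then show ?thesis
    using sum_subset_le_card_plus_zeros[OF finite_Q assms, of "\<lambda>q. card (col q)"]
      short card_by_cols by simp
qed

lemma heavy_col:
  assumes "q \<in> Q" "2 \<le> card (col q)"
  shows "card (col q) = 2" "card {q \<in> Q. col q = {}} = 1"
  using cols_budget[of "{q}"] assms empty_cols_le_1 by auto

lemma two_heavy_cols:
  assumes "q \<in> Q" "q' \<in> Q" "q \<noteq> q'" "2 \<le> card (col q)" "2 \<le> card (col q')"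
  shows False
  using cols_budget[of "{q, q'}"] assms empty_cols_le_1 by auto

text \<open>Two rows whose only codeword lies in the same column q: that column is {a, b}, and
  with the empty column z the block {a, b} x {q, z} is closed.\<close>

lemma no_shared_singleton_rows:
  assumes "a \<in> R" "b \<in> R" "a \<noteq> b" "row a = {q}" "row b = {q}"
  shows False
proof -
  have q: "q \<in> Q" using assms(4) row_subset by blast
  have ab: "{a, b} \<subseteq> col q" using assms(4,5) unfolding row_def col_def by auto
  moreover have "card {a, b} = 2" using assms(3) by simp
  ultimately have "2 \<le> card (col q)" using card_mono[OF finite_col] by metis
  then have "card (col q) = 2" and "card {q \<in> Q. col q = {}} = 1" using heavy_col q by auto
  then have col_q: "col q = {a, b}" using card_seteq[OF finite_col ab] assms(3) by simp
  obtain z where "{q \<in> Q. col q = {}} = {z}"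
    using \<open>card {q \<in> Q. col q = {}} = 1\<close> card_1_singletonE by blast
  then have z: "z \<in> Q" "col z = {}" by auto
  show False
  proof (rule no_closed_block)
    show "z \<noteq> q" using z(2) col_q by auto
    show "\<forall>(u, v) \<in> C. (u \<in> {a, b} \<or> v \<in> {z, q}) \<longrightarrow> u \<in> {a, b} \<and> v \<in> {z, q}"
      using assms(4,5) col_q z(2) unfolding row_def col_def by blast
  qed (use assms q z in auto)
qed

lemma singleton_row_col:
  assumes "r \<in> R" "row r = {q}"
  shows "q \<in> Q" "col q = {r} \<or> 2 \<le> card (col q)"
proof -
  show "q \<in> Q" using assms(2) row_subset by blast
  have r: "r \<in> col q" using assms(2) unfolding row_def col_def by auto
  show "col q = {r} \<or> 2 \<le> card (col q)"
  proof (cases "col q = {r}")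
    case False
    then obtain r' where "r' \<in> col q" "r' \<noteq> r" using r by blast
    then have "card {r, r'} \<le> card (col q)" using r by (intro card_mono finite_col) auto
    then show ?thesis using \<open>r' \<noteq> r\<close> by simp
  qed simp
qed

text \<open>The lower bound (fact 2). Counting rows yields three singleton rows; their columns
  are distinct, and at most one of them is heavy, so two singleton rows are isolated.\<close>

theorem card_lower_bound: "2 * card R \<le> card C + 4"
proof (rule ccontr)
  assume too_few: "\<not> 2 * card R \<le> card C + 4"
  define S1 where "S1 = {r \<in> R. card (row r) = 1}"
  have "{r \<in> R. card (row r) = 0} = {r \<in> R. row r = {}}" by (simp add: finite_row)
  then have "2 * card R \<le> card C + 2 * card {r \<in> R. row r = {}} + card S1"
    using double_card_le_sum[OF finite_R, of "\<lambda>r. card (row r)"] card_by_rows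
    unfolding S1_def by simp
  then have "3 \<le> card S1" using empty_rows_le_1 too_few by linarith
  then obtain r1 r2 r3 where r: "r1 \<in> S1" "r2 \<in> S1" "r3 \<in> S1"
      and distinct: "r1 \<noteq> r2" "r1 \<noteq> r3" "r2 \<noteq> r3"
    by (auto simp: numeral_3_eq_3 card_le_Suc_iff)
  have "\<exists>q. row r = {q}" if "r \<in> S1" for r
    using that unfolding S1_def by (auto simp: card_1_singleton_iff)
  then obtain q1 q2 q3 where q: "row r1 = {q1}" "row r2 = {q2}" "row r3 = {q3}"
    using r by metis
  have R: "r1 \<in> R" "r2 \<in> R" "r3 \<in> R" using r unfolding S1_def by auto
  note light_or_heavy = singleton_row_col[OF R(1) q(1)] singleton_row_col[OF R(2) q(2)]
    singleton_row_col[OF R(3) q(3)]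
  have distinct_cols: "q1 \<noteq> q2" "q1 \<noteq> q3" "q2 \<noteq> q3"
    using no_shared_singleton_rows R distinct q by metis+
  have "\<not> (2 \<le> card (col q1) \<and> 2 \<le> card (col q2))" "\<not> (2 \<le> card (col q1) \<and> 2 \<le> card (col q3))"
    "\<not> (2 \<le> card (col q2) \<and> 2 \<le> card (col q3))"
    using two_heavy_cols light_or_heavy distinct_cols by blast+
  moreover have "\<not> (col q1 = {r1} \<and> col q2 = {r2})" "\<not> (col q1 = {r1} \<and> col q3 = {r3})"
    "\<not> (col q2 = {r2} \<and> col q3 = {r3})"
    using no_isolated_pair R distinct q by blast+
  ultimately show False using light_or_heavy by blast
qed

end

end

section \<open>An identifying code of size 2n-4 in K_n x K_(2n-5)\<close>

definition witness_code :: "nat \<Rightarrow> (nat \<times> nat) set" where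
  "witness_code n = {(1, 1), (2, 1), (3, 1)} \<union> (\<lambda>j. ((j + 7) div 2, j)) ` {2..2*n-6}"

lemma witness_code_mem:
  "(a, b) \<in> witness_code n \<longleftrightarrow>
     (b = 1 \<and> a \<in> {1, 2, 3}) \<or> (2 \<le> b \<and> b \<le> 2*n-6 \<and> a = (b + 7) div 2)"
  unfolding witness_code_def by auto

lemma witness_code_subset: "n \<ge> 6 \<Longrightarrow> witness_code n \<subseteq> {1..n} \<times> {1..2*n-5}"
  by (auto simp: witness_code_def)

lemma card_witness_code: "n \<ge> 6 \<Longrightarrow> card (witness_code n) = 2*n-4"
proof -
  assume "n \<ge> 6"
  have "card ((\<lambda>j. ((j + 7) div 2, j)) ` {2..2*n-6}) = card {2..2*n-6}"
    by (rule card_image) (auto simp: inj_on_def)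
  moreover have "{(1::nat, 1::nat), (2, 1), (3, 1)} \<inter> (\<lambda>j. ((j + 7) div 2, j)) ` {2..2*n-6} = {}"
    by auto
  ultimately show ?thesis
    using \<open>n \<ge> 6\<close> unfolding witness_code_def by (simp add: card_Un_disjoint)
qed

text \<open>Every row carries a codeword: row a \<le> 3 in column 1, row a \<ge> 4 in column 2a-6.\<close>

lemma witness_code_row: "a \<in> {1..n} \<Longrightarrow> \<exists>b. (a, b) \<in> witness_code n"
  by (cases "a \<le> 3") (auto simp: witness_code_mem intro: exI[of _ "2*a-6"])

lemma witness_code_col: "b \<in> {1..2*n-6} \<Longrightarrow> \<exists>a. (a, b) \<in> witness_code n"
  by (cases "b = 1") (auto simp: witness_code_mem)

text \<open>The witness code has no closed 2x2 block: a row \<le> 3 would put column 1, hence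
  rows 1, 2, 3, into the block; rows a, a' \<ge> 4 force the columns 2a-6, 2a'-6, but the
  larger row also holds the odd column 2a-7.\<close>

lemma witness_code_no_closed_block:
  assumes rows: "r \<in> {1..n}" "r' \<in> {1..n}" and ne: "r \<noteq> r'" "q \<noteq> q'"
    and closed: "\<forall>(u, v) \<in> witness_code n.
        (u \<in> {r, r'} \<or> v \<in> {q, q'}) \<longrightarrow> u \<in> {r, r'} \<and> v \<in> {q, q'}"
  shows False
proof -
  have closed': "u \<in> {r, r'} \<and> v \<in> {q, q'}"
    if "(u, v) \<in> witness_code n" "u \<in> {r, r'} \<or> v \<in> {q, q'}" for u v
    using closed that by blast
  have big: "4 \<le> x" if "x \<in> {r, r'}" "1 \<le> x" for x
  proof (rule ccontr)
    assume "\<not> 4 \<le> x"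
    then have "(x, 1) \<in> witness_code n" using that by (auto simp: witness_code_mem)
    then have "1 \<in> {q, q'}" using closed' that(1) by blast
    then have "{1, 2, 3} \<subseteq> {r, r'}"
      using closed'[of 1 1] closed'[of 2 1] closed'[of 3 1] by (auto simp: witness_code_mem)
    then show False by auto
  qed
  have r4: "4 \<le> r" "4 \<le> r'" using big rows by auto
  have "(r, 2*r-6) \<in> witness_code n" "(r', 2*r'-6) \<in> witness_code n"
    using r4 rows by (auto simp: witness_code_mem)
  then have even_cols: "2*r-6 \<in> {q, q'}" "2*r'-6 \<in> {q, q'}"
    using closed' by blast+
  then have cols: "{q, q'} = {2*r-6, 2*r'-6}" using ne r4 by auto
  define s where "s = max r r'"
  have s: "s \<in> {r, r'}" "5 \<le> s" using r4 ne unfolding s_def by (auto simp: max_def)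
  then have "(s, 2*s-7) \<in> witness_code n" using rows by (auto simp: witness_code_mem)
  then have "2*s-7 \<in> {2*r-6, 2*r'-6}" using closed' s(1) cols by blast
  \<comment> \<open>impossible by parity\<close>
  then show False using s(2) r4 by auto presburger+
qed

lemma witness_code_dominates:
  "n \<ge> 6 \<Longrightarrow> \<exists>c \<in> witness_code n. fst c \<noteq> i \<and> snd c \<noteq> j"
proof -
  assume "n \<ge> 6"
  then have "(5, 3) \<in> witness_code n" "(6, 5) \<in> witness_code n"
    "(1, 1) \<in> witness_code n" "(2, 1) \<in> witness_code n"
    by (auto simp: witness_code_mem)
  then show ?thesis by (cases "j = 1"; cases "i = 5"; cases "i = 1") force+
qed

lemma witness_code_id_code:
  assumes n: "n \<ge> 6"
  shows "id_code ({1..n} \<times> {1..2*n-5}) KxK_adj (witness_code n)"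
proof -
  let ?V = "{1..n} \<times> {1..2*n-5}"
  note sub = witness_code_subset[OF n]
  have dom: "closed_nbhd ?V KxK_adj x \<inter> witness_code n \<noteq> {}" for x
  proof -
    obtain c where "c \<in> witness_code n" "fst c \<noteq> fst x \<and> snd c \<noteq> snd x"
      using witness_code_dominates[OF n] by blast
    then show ?thesis unfolding KxK_trace[OF sub] by blast
  qed
  have sep: "closed_nbhd ?V KxK_adj (a, b) \<inter> witness_code n
           \<noteq> closed_nbhd ?V KxK_adj (a', b') \<inter> witness_code n"
    if ab: "(a, b) \<in> ?V" "(a', b') \<in> ?V" "(a, b) \<noteq> (a', b')" for a b a' b'
  proof
    assume "closed_nbhd ?V KxK_adj (a, b) \<inter> witness_code n
          = closed_nbhd ?V KxK_adj (a', b') \<inter> witness_code n"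
    then consider
        (same_row) "a = a'" "\<forall>(u, v) \<in> witness_code n. v \<noteq> b \<and> v \<noteq> b'"
      | (same_col) "b = b'" "\<forall>(u, v) \<in> witness_code n. u \<noteq> a \<and> u \<noteq> a'"
      | (block) "a \<noteq> a'" "b \<noteq> b'" "\<forall>(u, v) \<in> witness_code n.
            (u \<in> {a, a'} \<or> v \<in> {b, b'}) \<longrightarrow> u \<in> {a, a'} \<and> v \<in> {b, b'}"
      using KxK_trace_eq_iff[OF sub ab(3)] by blast
    then show False
    proof cases
      case same_row
      then have "b \<in> {1..2*n-6} \<or> b' \<in> {1..2*n-6}" using ab by auto
      then show False using witness_code_col same_row(2) by blast
    next
      case same_col
      then show False using witness_code_row[of a n] ab(1) by auto
    next
      case block
      then show False using witness_code_no_closed_block[of a n a' b b'] ab by auto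
    qed
  qed
  show ?thesis unfolding id_code_def dominating_set_def using sub dom sep by auto
qed

lemma gamma_ID_eqI:
  assumes "finite V" and "id_code V E C" and "\<And>C'. id_code V E C' \<Longrightarrow> card C \<le> card C'"
  shows "gamma_ID V E = card C"
proof -
  have "{C. id_code V E C} \<subseteq> Pow V" unfolding id_code_def dominating_set_def by auto
  then have "finite (card ` {C. id_code V E C})" using assms(1) by (meson finite_Pow_iff finite_imageI finite_subset)
  then show ?thesis unfolding gamma_ID_def using assms(2,3) by (intro Min_eqI) auto
qed

theorem theorem4:
  fixes n :: nat
  assumes "n \<ge> 6"
  shows "gamma_ID (dprod_verts (K_verts n) (K_verts (2*n-5))) (dprod_adj K_adj K_adj) = 2*n-4"
proof -
  let ?R = "{1..n}" and ?Q = "{1..2*n-5}"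
  have minimal: "card (witness_code n) \<le> card C" if "id_code (?R \<times> ?Q) KxK_adj C" for C
  proof (rule ccontr)
    assume "\<not> ?thesis"
    then have short: "card C \<le> card ?Q" using card_witness_code assms by simp
    interpret KxK_id_code ?R ?Q C using that assms by unfold_locales auto
    have "2 * card ?R \<le> card C + 4" using short by (rule card_lower_bound)
    then show False using \<open>card C \<le> card ?Q\<close> assms by simp
  qed
  have "gamma_ID (?R \<times> ?Q) KxK_adj = card (witness_code n)"
    using witness_code_id_code[OF assms] minimal by (intro gamma_ID_eqI) auto
  then show ?thesis
    unfolding dprod_verts_def K_verts_def dprod_K_adj card_witness_code[OF assms] .
qed

end
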